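(* Let $n \ge 3$. Then \[\det'(Q_n) = \begin{cases} \lceil \log_2 n \rceil + 1, & \text{if } n - \lceil \log_2 n \rceil > 2^{\lceil \log_2 n \rceil - 1},\\ \lceil \log_2 n \rceil, & \text{otherwise.}\end{cases}\]
   Context: $Q_n$ is the $n$-dimensional hypercube: its vertices are the binary strings of length $n$, two being adjacent iff they differ in exactly one bit. For a graph $G$ with at most one isolated vertex and no component isomorphic to $K_2$, an edge subset $T$ is an edge determining set if the only automorphism $\phi$ of $G$ satisfying $\{\phi(u),\phi(v)\}=\{u,v\}$ for all $\{u,v\}\in T$ is the identity; the determining index $\det'(G)$ is the minimum size of an edge determining set. *)

theory Defs
  imports Complex_Main
begin

text \<open>A simple graph is given by a vertex set V and a symmetric irreflexive
  adjacency relation adj; edges are two-element sets {u,v} with adj u v.\<close>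

definition edges :: "'a set \<Rightarrow> ('a \<Rightarrow> 'a \<Rightarrow> bool) \<Rightarrow> 'a set set" where
  "edges V adj = {{u, v} | u v. u \<in> V \<and> v \<in> V \<and> adj u v}"

definition graph_aut :: "'a set \<Rightarrow> ('a \<Rightarrow> 'a \<Rightarrow> bool) \<Rightarrow> ('a \<Rightarrow> 'a) \<Rightarrow> bool" where
  "graph_aut V adj \<phi> \<longleftrightarrow> bij_betw \<phi> V V \<and>
     (\<forall>u\<in>V. \<forall>v\<in>V. adj (\<phi> u) (\<phi> v) \<longleftrightarrow> adj u v)"

definition edge_determining_set :: "'a set \<Rightarrow> ('a \<Rightarrow> 'a \<Rightarrow> bool) \<Rightarrow> 'a set set \<Rightarrow> bool" where
  "edge_determining_set V adj T \<longleftrightarrow> T \<subseteq> edges V adj \<and>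
     (\<forall>\<phi>. graph_aut V adj \<phi> \<and> (\<forall>e\<in>T. \<phi> ` e = e) \<longrightarrow> (\<forall>v\<in>V. \<phi> v = v))"

definition determining_index :: "'a set \<Rightarrow> ('a \<Rightarrow> 'a \<Rightarrow> bool) \<Rightarrow> nat" where
  "determining_index V adj = (LEAST k. \<exists>T. edge_determining_set V adj T \<and> finite T \<and> card T = k)"

definition hypercube_vertices :: "nat \<Rightarrow> bool list set" where
  "hypercube_vertices n = {xs. length xs = n}"

definition hypercube_adj :: "bool list \<Rightarrow> bool list \<Rightarrow> bool" where
  "hypercube_adj xs ys \<longleftrightarrow> length xs = length ys \<and>
     card {i. i < length xs \<and> xs ! i \<noteq> ys ! i} = 1"

end

theory Submission
  imports Defs "HOL-Library.Log_Nat"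
begin

text \<open>Automorphisms of the hypercube preserve Hamming distance, hence act as
  \<open>x \<mapsto> \<pi>(x) \<oplus> a\<close> for a permutation \<pi> of the coordinates and a vector \<open>a\<close>.

  Lower bound: the edges of a set \<open>T\<close> with \<open>m\<close> elements use at most \<open>m\<close> directions, so at
  least \<open>n - m\<close> coordinates are constant on every edge of \<open>T\<close>. Up to complementation such a
  coordinate is described by the subset of edges on which it differs from a fixed edge, which
  leaves \<open>2^(m-1)\<close> possibilities. If \<open>n - m > 2^(m-1)\<close>, two coordinates \<open>p \<noteq> q\<close> have
  \<open>x\<^sub>p \<oplus> x\<^sub>q\<close> constant on all of \<open>T\<close>, and exchanging them (complementing both if that
  constant is 1) is a non-trivial automorphism fixing every edge of \<open>T\<close>.

  Upper bound: take \<open>m\<close> edges in directions \<open>0, \<dots>, m-1\<close> whose base vertices write the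
  binary label \<open>p - m < 2^(m-1)\<close> into every remaining coordinate \<open>p\<close>. An automorphism fixing
  them fixes each direction, complements nothing and preserves all labels, so it is the identity.
  The least \<open>m\<close> with \<open>n - m \<le> 2^(m-1)\<close> is the stated expression in \<open>\<lceil>log\<^sub>2 n\<rceil>\<close>.\<close>

definition diffs :: "bool list \<Rightarrow> bool list \<Rightarrow> nat set" where
  "diffs x y = {i. i < length x \<and> x ! i \<noteq> y ! i}"

definition hamming :: "bool list \<Rightarrow> bool list \<Rightarrow> nat" where
  "hamming x y = card (diffs x y)"

definition flip :: "nat \<Rightarrow> bool list \<Rightarrow> bool list" where
  "flip i x = x[i := \<not> x ! i]"

lemma finite_diffs [simp]: "finite (diffs x y)"
  unfolding diffs_def by (rule finite_subset[of _ "{..<length x}"]) auto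

lemma length_flip [simp]: "length (flip i x) = length x"
  by (simp add: flip_def)

lemma nth_flip: "j < length x \<Longrightarrow> flip i x ! j = (if i = j then \<not> x ! j else x ! j)"
  by (simp add: flip_def nth_list_update)

lemma nth_flip_other: "i \<noteq> j \<Longrightarrow> flip i x ! j = x ! j"
  by (simp add: flip_def)

lemma hamming_commute: "length x = length y \<Longrightarrow> hamming x y = hamming y x"
  unfolding hamming_def diffs_def by (metis (full_types))

lemma hamming_self [simp]: "hamming x x = 0"
  by (simp add: hamming_def diffs_def)

lemma hamming_eq_0_iff: "length x = length y \<Longrightarrow> hamming x y = 0 \<longleftrightarrow> x = y"
  by (auto simp: hamming_def diffs_def intro: nth_equalityI)

lemma hamming_triangle: "length x = length z \<Longrightarrow> hamming x y \<le> hamming x z + hamming z y"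
proof -
  assume "length x = length z"
  then have "diffs x y \<subseteq> diffs x z \<union> diffs z y"
    unfolding diffs_def by auto
  then have "hamming x y \<le> card (diffs x z \<union> diffs z y)"
    unfolding hamming_def by (intro card_mono) auto
  also have "\<dots> \<le> hamming x z + hamming z y"
    unfolding hamming_def by (rule card_Un_le)
  finally show ?thesis .
qed

lemma hamming_flip:
  assumes "length x = length y" "i < length y"
  shows "hamming x (flip i y) = (if x ! i = y ! i then hamming x y + 1 else hamming x y - 1)"
proof -
  have "diffs x (flip i y) = (if x ! i = y ! i then insert i (diffs x y) else diffs x y - {i})"
    using assms by (auto simp: diffs_def nth_flip split: if_splits)
  moreover have "i \<in> diffs x y \<longleftrightarrow> x ! i \<noteq> y ! i"
    using assms by (simp add: diffs_def)
  ultimately show ?thesis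
    by (simp add: hamming_def)
qed

lemma hypercube_adj_iff_hamming: "hypercube_adj x y \<longleftrightarrow> length x = length y \<and> hamming x y = 1"
  by (simp add: hypercube_adj_def hamming_def diffs_def)

lemma hypercube_adj_flip: "i < length x \<Longrightarrow> hypercube_adj x (flip i x)"
  using hamming_flip[of x x i] by (simp add: hypercube_adj_iff_hamming)

lemma hypercube_edgeE:
  assumes "e \<in> edges (hypercube_vertices n) hypercube_adj"
  obtains u j where "e = {u, flip j u}" "length u = n" "j < n"
proof -
  obtain u v where uv: "e = {u, v}" "length u = n" "length v = n" "hypercube_adj u v"
    using assms unfolding edges_def hypercube_vertices_def by auto
  then have "card (diffs u v) = 1"
    by (simp add: hypercube_adj_iff_hamming hamming_def)
  then obtain j where j: "diffs u v = {j}"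
    by (rule card_1_singletonE)
  then have "j < n" "v ! j \<noteq> u ! j"
    using uv by (auto simp: diffs_def)
  moreover have "v ! k = u ! k" if "k < n" "k \<noteq> j" for k
  proof -
    have "k \<notin> diffs u v" using j that(2) by simp
    then show ?thesis using that(1) uv(2) by (auto simp: diffs_def)
  qed
  ultimately have "v = flip j u"
    using uv by (intro nth_equalityI) (auto simp: nth_flip)
  with \<open>j < n\<close> show ?thesis
    using that uv by blast
qed

lemma graph_aut_inv_into:
  assumes "graph_aut V adj \<phi>"
  shows "graph_aut V adj (inv_into V \<phi>)"
proof -
  have bij: "bij_betw (inv_into V \<phi>) V V"
    using assms bij_betw_inv_into unfolding graph_aut_def by blast
  have "adj (inv_into V \<phi> u) (inv_into V \<phi> v) \<longleftrightarrow> adj u v" if "u \<in> V" "v \<in> V" for u v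
  proof -
    have "inv_into V \<phi> u \<in> V" "inv_into V \<phi> v \<in> V"
      using bij that bij_betwE by blast+
    moreover have "\<phi> (inv_into V \<phi> u) = u" "\<phi> (inv_into V \<phi> v) = v"
      using assms that unfolding graph_aut_def by (auto simp: bij_betw_def f_inv_into_f)
    ultimately show ?thesis
      using assms unfolding graph_aut_def by metis
  qed
  with bij show ?thesis
    unfolding graph_aut_def by blast
qed

lemma length_hypercube_aut:
  "graph_aut (hypercube_vertices n) hypercube_adj \<phi> \<Longrightarrow> length x = n \<Longrightarrow> length (\<phi> x) = n"
  unfolding graph_aut_def hypercube_vertices_def bij_betw_def by auto

lemma hamming_hypercube_aut_le:
  assumes aut: "graph_aut (hypercube_vertices n) hypercube_adj \<phi>"
    and x: "length x = n" and y: "length y = n"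
  shows "hamming (\<phi> x) (\<phi> y) \<le> hamming x y"
proof -
  have "hamming (\<phi> x) (\<phi> y) \<le> d" if "hamming x y = d" "length y = n" for d y
    using that
  proof (induction d arbitrary: y)
    case 0
    then show ?case using x by (simp add: hamming_eq_0_iff)
  next
    case (Suc d)
    then have "diffs x y \<noteq> {}"
      by (auto simp: hamming_def)
    then obtain i where i: "i < n" "x ! i \<noteq> y ! i"
      by (auto simp: diffs_def x)
    define z where "z = flip i y"
    have z: "length z = n" "hamming x z = d"
      using Suc.prems i x by (simp_all add: z_def hamming_flip)
    have "hypercube_adj z y"
      using hypercube_adj_flip[of i y] Suc.prems i
      by (simp add: z_def hypercube_adj_iff_hamming hamming_commute)
    then have "hypercube_adj (\<phi> z) (\<phi> y)"
      using aut z Suc.prems unfolding graph_aut_def hypercube_vertices_def by auto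
    then have "hamming (\<phi> z) (\<phi> y) = 1"
      by (simp add: hypercube_adj_iff_hamming)
    moreover have "hamming (\<phi> x) (\<phi> z) \<le> d"
      using Suc.IH z by blast
    ultimately show ?case
      using hamming_triangle[of "\<phi> x" "\<phi> z" "\<phi> y"] length_hypercube_aut[OF aut] x z by simp
  qed
  with y show ?thesis by blast
qed

lemma hamming_hypercube_aut:
  assumes aut: "graph_aut (hypercube_vertices n) hypercube_adj \<phi>"
    and x: "length x = n" and y: "length y = n"
  shows "hamming (\<phi> x) (\<phi> y) = hamming x y"
proof -
  let ?\<psi> = "inv_into (hypercube_vertices n) \<phi>"
  have "?\<psi> (\<phi> x) = x" "?\<psi> (\<phi> y) = y"
    using aut x y unfolding graph_aut_def bij_betw_def hypercube_vertices_def
    by (auto intro: inv_into_f_f)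
  moreover have "hamming (?\<psi> (\<phi> x)) (?\<psi> (\<phi> y)) \<le> hamming (\<phi> x) (\<phi> y)"
    using hamming_hypercube_aut_le[OF graph_aut_inv_into[OF aut]] length_hypercube_aut[OF aut] x y
    by blast
  ultimately show ?thesis
    using hamming_hypercube_aut_le[OF aut x y] by simp
qed

lemma hypercube_aut_structure:
  assumes aut: "graph_aut (hypercube_vertices n) hypercube_adj \<phi>"
  obtains \<pi> a where "bij_betw \<pi> {..<n} {..<n}" "length a = n"
    "\<And>x i. length x = n \<Longrightarrow> i < n \<Longrightarrow> \<phi> x ! \<pi> i = (x ! i \<noteq> a ! \<pi> i)"
proof -
  define z where "z = replicate n False"
  define a where "a = \<phi> z"
  have z: "length z = n" and a: "length a = n" and lflip: "length (flip i z) = n" for i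
    using length_hypercube_aut[OF aut] by (simp_all add: z_def a_def)
  \<comment> \<open>The neighbours \<open>flip i z\<close> of the zero vector go to neighbours of \<open>a\<close>; this defines \<open>\<pi>\<close>.\<close>
  have "hamming a (\<phi> (flip i z)) = 1" if "i < n" for i
    using hamming_hypercube_aut[OF aut z lflip] hamming_flip[of z z i] that z by (simp add: a_def)
  then have "\<exists>j. diffs a (\<phi> (flip i z)) = {j}" if "i < n" for i
    using that by (simp add: hamming_def card_1_singleton_iff)
  then obtain \<pi> where \<pi>: "\<And>i. i < n \<Longrightarrow> diffs a (\<phi> (flip i z)) = {\<pi> i}"
    by metis
  have \<pi>_less: "\<pi> i < n" if "i < n" for i
    using \<pi>[OF that] a by (auto simp: diffs_def)
  have \<phi>_flip: "\<phi> (flip i z) = flip (\<pi> i) a" if i: "i < n" for i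
  proof (rule nth_equalityI)
    fix k assume "k < length (\<phi> (flip i z))"
    then have "k < n" using length_hypercube_aut[OF aut lflip] by simp
    moreover have "k \<in> diffs a (\<phi> (flip i z)) \<longleftrightarrow> k = \<pi> i" using \<pi>[OF i] by auto
    ultimately show "\<phi> (flip i z) ! k = flip (\<pi> i) a ! k"
      using a by (cases "k = \<pi> i") (auto simp: diffs_def nth_flip)
  qed (use length_hypercube_aut[OF aut lflip] a in simp)
  have coord: "\<phi> x ! \<pi> i = (x ! i \<noteq> a ! \<pi> i)" if x: "length x = n" and i: "i < n" for x i
  proof -
    have lx: "length (\<phi> x) = n" using length_hypercube_aut[OF aut x] .
    have "hamming (\<phi> x) (flip (\<pi> i) a) = hamming x (flip i z)"
      using hamming_hypercube_aut[OF aut x lflip[of i]] \<phi>_flip[OF i] by simp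
    moreover have "hamming (\<phi> x) a = hamming x z"
      unfolding a_def using hamming_hypercube_aut[OF aut x z] .
    ultimately show ?thesis
      using hamming_flip[of x z i] hamming_flip[of "\<phi> x" a "\<pi> i"] x z a lx i \<pi>_less[OF i]
      by (cases "x ! i"; cases "\<phi> x ! \<pi> i = a ! \<pi> i") (auto simp: z_def)
  qed
  have "inj_on \<pi> {..<n}"
  proof (rule inj_onI)
    fix i j assume ij: "i \<in> {..<n}" "j \<in> {..<n}" "\<pi> i = \<pi> j"
    then have "\<phi> (flip i z) = \<phi> (flip j z)" using \<phi>_flip by simp
    moreover have "inj_on \<phi> (hypercube_vertices n)"
      using aut unfolding graph_aut_def bij_betw_def by simp
    ultimately have "flip i z = flip j z"
      using lflip unfolding hypercube_vertices_def inj_on_def by blast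
    then have "flip i z ! i = flip j z ! i" by simp
    then show "i = j" using ij z by (auto simp: nth_flip z_def split: if_splits)
  qed
  moreover have "\<pi> ` {..<n} = {..<n}"
    using calculation \<pi>_less by (intro endo_inj_surj) auto
  ultimately have "bij_betw \<pi> {..<n} {..<n}"
    by (simp add: bij_betw_def)
  with a coord show ?thesis using that by blast
qed

definition swap_xor :: "nat \<Rightarrow> nat \<Rightarrow> bool \<Rightarrow> bool list \<Rightarrow> bool list" where
  "swap_xor p q c x = x[p := (x ! q \<noteq> c), q := (x ! p \<noteq> c)]"

lemma length_swap_xor [simp]: "length (swap_xor p q c x) = length x"
  by (simp add: swap_xor_def)

lemma nth_swap_xor:
  assumes "p < length x" "q < length x" "p \<noteq> q" "i < length x"
  shows "swap_xor p q c x ! i =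
    (if i = p then x ! q \<noteq> c else if i = q then x ! p \<noteq> c else x ! i)"
  using assms by (auto simp: swap_xor_def nth_list_update)

lemma swap_xor_fixed:
  assumes "(x ! p \<noteq> x ! q) = c"
  shows "swap_xor p q c x = x"
proof -
  have "(x ! q \<noteq> c) = x ! p" "(x ! p \<noteq> c) = x ! q"
    using assms by auto
  then show ?thesis
    by (simp add: swap_xor_def)
qed

lemma swap_xor_involution:
  assumes "p < length x" "q < length x" "p \<noteq> q"
  shows "swap_xor p q c (swap_xor p q c x) = x"
  using assms by (intro nth_equalityI) (auto simp: nth_swap_xor)

lemma hypercube_aut_swap_xor:
  assumes pq: "p < n" "q < n" "p \<noteq> q"
  shows "graph_aut (hypercube_vertices n) hypercube_adj (swap_xor p q c)"
  unfolding graph_aut_def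
proof
  let ?V = "hypercube_vertices n"
  show "bij_betw (swap_xor p q c) ?V ?V"
    using pq by (intro bij_betw_byWitness[of _ "swap_xor p q c"])
      (auto simp: hypercube_vertices_def swap_xor_involution)
  let ?\<tau> = "id(p := q, q := p)"
  have "hamming (swap_xor p q c x) (swap_xor p q c y) = hamming x y"
    if "length x = n" "length y = n" for x y
  proof -
    have "i \<in> diffs (swap_xor p q c x) (swap_xor p q c y) \<longleftrightarrow> ?\<tau> i \<in> diffs x y" for i
      using that pq by (auto simp: diffs_def nth_swap_xor)
    moreover have "?\<tau> (?\<tau> i) = i" for i
      by simp
    ultimately have "bij_betw ?\<tau> (diffs (swap_xor p q c x) (swap_xor p q c y)) (diffs x y)"
      by (intro bij_betw_byWitness[of _ ?\<tau>]) auto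
    then show ?thesis
      by (simp add: hamming_def bij_betw_same_card)
  qed
  then show "\<forall>u\<in>?V. \<forall>v\<in>?V. hypercube_adj (swap_xor p q c u) (swap_xor p q c v) \<longleftrightarrow> hypercube_adj u v"
    by (simp add: hypercube_vertices_def hypercube_adj_iff_hamming)
qed

lemma hypercube_edges_coordinate_pair:
  assumes T: "T \<subseteq> edges (hypercube_vertices n) hypercube_adj" and fin: "finite T"
    and many: "2 ^ (card T - 1) < n - card T"
  obtains p q c where "p < n" "q < n" "p \<noteq> q"
    "\<And>e x. e \<in> T \<Longrightarrow> x \<in> e \<Longrightarrow> (x ! p \<noteq> x ! q) = c"
proof -
  have "\<forall>e\<in>T. \<exists>u j. e = {u, flip j u} \<and> length u = n \<and> j < n"
    using T by (blast elim: hypercube_edgeE)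
  then obtain base dir where edge: "\<And>e. e \<in> T \<Longrightarrow> e = {base e, flip (dir e) (base e)}"
    and len: "\<And>e. e \<in> T \<Longrightarrow> length (base e) = n"
    by metis
  define P where "P = {..<n} - dir ` T"
  have "card (dir ` T) \<le> card T"
    using fin by (rule card_image_le)
  then have card_P: "n - card T \<le> card P"
    unfolding P_def using diff_card_le_card_Diff[of "dir ` T" "{..<n}"] fin by simp
  have base: "x ! p = base e ! p" if "e \<in> T" "x \<in> e" "p \<in> P" for e x p
  proof -
    have "x = base e \<or> x = flip (dir e) (base e)"
      using edge[OF that(1)] that(2) by blast
    moreover have "p \<noteq> dir e" "p < n"
      using that(1,3) by (auto simp: P_def)
    ultimately show ?thesis
      using len[OF that(1)] by (auto simp: nth_flip)
  qed
  \<comment> \<open>For \<open>T = {}\<close> the edge \<open>e0\<close> is arbitrary, but the count below still holds.\<close>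
  define e0 where "e0 = (SOME e. e \<in> T)"
  define cls where "cls p = {e \<in> T. base e ! p \<noteq> base e0 ! p}" for p
  have "card (T - {e0}) = card T - 1"
    using fin by (cases "T = {}") (simp_all add: e0_def some_in_eq)
  moreover have "cls ` P \<subseteq> Pow (T - {e0})"
    by (auto simp: cls_def)
  ultimately have "card (cls ` P) \<le> 2 ^ (card T - 1)"
    using card_mono[of "Pow (T - {e0})" "cls ` P"] fin by (simp add: card_Pow)
  then have "\<not> inj_on cls P"
    using card_P many by (metis card_image leD le_trans)
  then obtain p q where pq: "p \<in> P" "q \<in> P" "p \<noteq> q" "cls p = cls q"
    unfolding inj_on_def by blast
  have "(x ! p \<noteq> x ! q) = (base e0 ! p \<noteq> base e0 ! q)" if "e \<in> T" "x \<in> e" for e x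
  proof -
    have "e \<in> cls p \<longleftrightarrow> e \<in> cls q"
      using pq by simp
    then show ?thesis
      using that base[OF that pq(1)] base[OF that pq(2)] by (auto simp: cls_def)
  qed
  moreover have "p < n" "q < n"
    using pq by (auto simp: P_def)
  ultimately show ?thesis
    using that pq(3) by blast
qed

lemma hypercube_edge_determining_card_lower:
  assumes det: "edge_determining_set (hypercube_vertices n) hypercube_adj T" and fin: "finite T"
  shows "n - card T \<le> 2 ^ (card T - 1)"
proof (rule ccontr)
  assume "\<not> ?thesis"
  then have many: "2 ^ (card T - 1) < n - card T"
    by simp
  have "T \<subseteq> edges (hypercube_vertices n) hypercube_adj"
    using det by (simp add: edge_determining_set_def)
  then obtain p q c where pq: "p < n" "q < n" "p \<noteq> q"
    and const: "\<And>e x. e \<in> T \<Longrightarrow> x \<in> e \<Longrightarrow> (x ! p \<noteq> x ! q) = c"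
    using hypercube_edges_coordinate_pair[OF _ fin many] by blast
  have "swap_xor p q c ` e = e" if "e \<in> T" for e
    using swap_xor_fixed[OF const[OF that]] by simp
  then have fixes_all: "\<forall>x\<in>hypercube_vertices n. swap_xor p q c x = x"
    using det hypercube_aut_swap_xor[OF pq] by (simp add: edge_determining_set_def)
  define x where "x = (replicate n False)[p := \<not> c]"
  have "x \<in> hypercube_vertices n"
    by (simp add: x_def hypercube_vertices_def)
  moreover have "swap_xor p q c x ! q \<noteq> x ! q"
    using pq by (simp add: x_def nth_swap_xor nth_list_update)
  ultimately show False
    using fixes_all by auto
qed

lemma hypercube_aut_fixing_edge:
  assumes \<phi>: "\<And>x i. length x = n \<Longrightarrow> i < n \<Longrightarrow> \<phi> x ! \<pi> i = (x ! i \<noteq> a ! \<pi> i)"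
    and u: "length u = n" and t: "t < n" and fixed: "\<phi> ` {u, flip t u} = {u, flip t u}"
  shows "\<pi> t = t" and "\<And>i. i < n \<Longrightarrow> \<pi> i \<noteq> t \<Longrightarrow> u ! \<pi> i = (u ! i \<noteq> a ! \<pi> i)"
proof -
  have agree: "y ! j = u ! j" if "y \<in> \<phi> ` {u, flip t u}" "j \<noteq> t" for y j
  proof -
    have "y = u \<or> y = flip t u"
      using that(1) fixed by blast
    then show ?thesis
      using nth_flip_other[OF that(2)[symmetric]] by auto
  qed
  show "\<pi> t = t"
  proof (rule ccontr)
    assume "\<pi> t \<noteq> t"
    then have "\<phi> u ! \<pi> t = \<phi> (flip t u) ! \<pi> t"
      using agree by simp
    then show False
      using \<phi>[OF u t] \<phi>[of "flip t u" t] u t by (cases "u ! t") (auto simp: nth_flip)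
  qed
  show "u ! \<pi> i = (u ! i \<noteq> a ! \<pi> i)" if "i < n" "\<pi> i \<noteq> t" for i
    using agree[of "\<phi> u" "\<pi> i"] \<phi>[OF u that(1)] that(2) by simp
qed

definition coding_vertex :: "nat \<Rightarrow> nat \<Rightarrow> nat \<Rightarrow> bool list" where
  "coding_vertex k n t = map (\<lambda>p. k \<le> p \<and> 0 < t \<and> bit (p - k) (t - 1)) [0..<n]"

definition coding_edges :: "nat \<Rightarrow> nat \<Rightarrow> bool list set set" where
  "coding_edges k n = (\<lambda>t. {coding_vertex k n t, flip t (coding_vertex k n t)}) ` {..<k}"

lemma length_coding_vertex [simp]: "length (coding_vertex k n t) = n"
  by (simp add: coding_vertex_def)

lemma nth_coding_vertex:
  "p < n \<Longrightarrow> coding_vertex k n t ! p \<longleftrightarrow> k \<le> p \<and> 0 < t \<and> bit (p - k) (t - 1)"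
  by (simp add: coding_vertex_def)

lemma coding_edges_subset:
  assumes "k \<le> n"
  shows "coding_edges k n \<subseteq> edges (hypercube_vertices n) hypercube_adj"
proof
  fix e assume "e \<in> coding_edges k n"
  then obtain t where "t < k" and e: "e = {coding_vertex k n t, flip t (coding_vertex k n t)}"
    by (auto simp: coding_edges_def)
  then have "hypercube_adj (coding_vertex k n t) (flip t (coding_vertex k n t))"
    using assms by (intro hypercube_adj_flip) simp
  then show "e \<in> edges (hypercube_vertices n) hypercube_adj"
    unfolding e edges_def hypercube_vertices_def
    by (intro CollectI exI[of _ "coding_vertex k n t"] exI[of _ "flip t (coding_vertex k n t)"]) simp
qed

lemma card_coding_edges:
  assumes "k \<le> n"
  shows "card (coding_edges k n) = k"
proof -
  have "inj_on (\<lambda>t. {coding_vertex k n t, flip t (coding_vertex k n t)}) {..<k}"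
  proof (rule inj_onI)
    fix s t assume st: "s \<in> {..<k}" "t \<in> {..<k}"
      and eq: "{coding_vertex k n s, flip s (coding_vertex k n s)} =
        {coding_vertex k n t, flip t (coding_vertex k n t)}"
    have "flip t (coding_vertex k n t) ! t"
      using st assms by (simp add: nth_flip nth_coding_vertex)
    moreover have "\<not> coding_vertex k n s ! t"
      using st assms by (simp add: nth_coding_vertex)
    moreover have "flip t (coding_vertex k n t) \<in> {coding_vertex k n s, flip s (coding_vertex k n s)}"
      using eq by simp
    ultimately have "flip s (coding_vertex k n s) ! t"
      by auto
    with \<open>\<not> coding_vertex k n s ! t\<close> show "s = t"
      using nth_flip_other[of s t] by auto
  qed
  then show ?thesis
    by (simp add: coding_edges_def card_image)
qed

lemma nat_eq_if_low_bits_eq: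
  fixes a b :: nat
  assumes "a < 2 ^ m" "b < 2 ^ m" "\<And>s. s < m \<Longrightarrow> bit a s \<longleftrightarrow> bit b s"
  shows "a = b"
proof -
  have "take_bit m a = take_bit m b"
    using assms(3) by (auto simp: bit_eq_iff bit_take_bit_iff)
  then show ?thesis
    using assms(1,2) by (simp add: take_bit_nat_eq_self)
qed

lemma coding_edges_determining:
  assumes k: "2 \<le> k" "k \<le> n" and labels: "n - k \<le> 2 ^ (k - 1)"
  shows "edge_determining_set (hypercube_vertices n) hypercube_adj (coding_edges k n)"
  unfolding edge_determining_set_def
proof (intro conjI allI impI ballI)
  show "coding_edges k n \<subseteq> edges (hypercube_vertices n) hypercube_adj"
    using k(2) by (rule coding_edges_subset)
  fix \<phi> v
  assume "graph_aut (hypercube_vertices n) hypercube_adj \<phi> \<and> (\<forall>e\<in>coding_edges k n. \<phi> ` e = e)"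
  then have aut: "graph_aut (hypercube_vertices n) hypercube_adj \<phi>"
    and fixed: "\<And>e. e \<in> coding_edges k n \<Longrightarrow> \<phi> ` e = e"
    by auto
  obtain \<pi> a where bij: "bij_betw \<pi> {..<n} {..<n}"
    and coord: "\<And>x i. length x = n \<Longrightarrow> i < n \<Longrightarrow> \<phi> x ! \<pi> i = (x ! i \<noteq> a ! \<pi> i)"
    using hypercube_aut_structure[OF aut] by metis
  let ?u = "coding_vertex k n"
  have edge_fixed: "\<phi> ` {?u t, flip t (?u t)} = {?u t, flip t (?u t)}" if "t < k" for t
    using that by (intro fixed) (auto simp: coding_edges_def)
  have \<pi>_low: "\<pi> t = t" if "t < k" for t
    using hypercube_aut_fixing_edge(1)[OF coord _ _ edge_fixed] that k by simp
  have base: "?u t ! \<pi> i = (?u t ! i \<noteq> a ! \<pi> i)" if "t < k" "i < n" "\<pi> i \<noteq> t" for t i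
    using hypercube_aut_fixing_edge(2)[OF coord _ _ edge_fixed] that k by simp
  have inj: "inj_on \<pi> {..<n}" and \<pi>_less: "\<And>i. i < n \<Longrightarrow> \<pi> i < n"
    using bij by (auto simp: bij_betw_def)
  have a_low: "\<not> a ! i" if i: "i < k" for i
  proof -
    define t where "t = (if i = 0 then 1 else 0 :: nat)"
    have "t < k" "t \<noteq> i"
      using k by (auto simp: t_def)
    then show ?thesis
      using base[of t i] \<pi>_low[OF i] i k by (simp add: nth_coding_vertex)
  qed
  have high: "\<pi> q = q \<and> \<not> a ! q" if q: "k \<le> q" "q < n" for q
  proof -
    define p where "p = \<pi> q"
    have p: "p < n" "k \<le> p"
    proof -
      show "p < n" using \<pi>_less q by (simp add: p_def)
      show "k \<le> p"
      proof (rule ccontr)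
        assume "\<not> k \<le> p"
        then have "\<pi> p = \<pi> q" using \<pi>_low by (simp add: p_def)
        then show False using inj q \<open>\<not> k \<le> p\<close> \<open>p < n\<close> by (auto simp: inj_on_def)
      qed
    qed
    have same: "?u t ! p = (?u t ! q \<noteq> a ! p)" if "t < k" for t
      using base[of t q] that p q by (simp add: p_def)
    have "\<not> a ! p"
      using same[of 0] k p q by (simp add: nth_coding_vertex)
    then have "bit (p - k) s = bit (q - k) s" if "s < k - 1" for s
      using same[of "Suc s"] that p q by (simp add: nth_coding_vertex)
    moreover have "p - k < 2 ^ (k - 1)" "q - k < 2 ^ (k - 1)"
      using p q labels by linarith+
    ultimately have "p - k = q - k"
      by (intro nat_eq_if_low_bits_eq[of _ "k - 1"]) auto
    then have "p = q"
      using p(2) q(1) by linarith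
    with \<open>\<not> a ! p\<close> show ?thesis
      by (simp add: p_def)
  qed
  have trivial: "\<pi> i = i \<and> \<not> a ! i" if "i < n" for i
    using \<pi>_low a_low high that by (cases "i < k") auto
  assume "v \<in> hypercube_vertices n"
  then have "length v = n"
    by (simp add: hypercube_vertices_def)
  then show "\<phi> v = v"
    using length_hypercube_aut[OF aut] coord trivial by (intro nth_equalityI) force+
qed

theorem hypercube_determining_index_eq_Least:
  assumes "n \<ge> 3"
  shows "determining_index (hypercube_vertices n) hypercube_adj = (LEAST m. n - m \<le> 2 ^ (m - 1))"
proof -
  let ?m = "LEAST m. n - m \<le> 2 ^ (m - 1)"
  have m: "n - ?m \<le> 2 ^ (?m - 1)"
    by (rule LeastI[of _ n]) simp
  have "?m \<le> n"
    by (rule Least_le) simp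
  moreover have "2 \<le> ?m"
  proof (rule ccontr)
    assume "\<not> 2 \<le> ?m"
    then have "?m = 0 \<or> ?m = 1" by linarith
    then show False using m assms by auto
  qed
  ultimately have "edge_determining_set (hypercube_vertices n) hypercube_adj (coding_edges ?m n)"
    using m by (intro coding_edges_determining)
  then have witness: "\<exists>T. edge_determining_set (hypercube_vertices n) hypercube_adj T \<and> finite T \<and> card T = ?m"
    using card_coding_edges[OF \<open>?m \<le> n\<close>] by (auto simp: coding_edges_def)
  show ?thesis
    unfolding determining_index_def
  proof (rule Least_equality)
    show "\<exists>T. edge_determining_set (hypercube_vertices n) hypercube_adj T \<and> finite T \<and> card T = ?m"
      by (fact witness)
  next
    fix k assume "\<exists>T. edge_determining_set (hypercube_vertices n) hypercube_adj T \<and> finite T \<and> card T = k"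
    then have "n - k \<le> 2 ^ (k - 1)"
      using hypercube_edge_determining_card_lower by blast
    then show "?m \<le> k"
      by (rule Least_le)
  qed
qed

lemma ceillog2_bounds:
  fixes n :: nat assumes "n \<ge> 3"
  shows "2 ^ (ceillog2 n - 1) < n" "n \<le> 2 ^ ceillog2 n" "2 \<le> ceillog2 n"
proof -
  show "2 \<le> ceillog2 n"
    using assms by (subst ceillog2_ge_iff) auto
  then show "2 ^ (ceillog2 n - 1) < n"
    using ceillog2_le_iff[of n "ceillog2 n - 1"] assms by auto
  show "n \<le> 2 ^ ceillog2 n"
    by (rule le_two_power_ceillog2)
qed

lemma Least_eq_ceillog2:
  assumes "n \<ge> 3"
  shows "(LEAST m. n - m \<le> 2 ^ (m - 1)) =
    (let k = ceillog2 n in if n - k > 2 ^ (k - 1) then k + 1 else k)"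
proof -
  define k where "k = ceillog2 n"
  note bounds = ceillog2_bounds[OF assms, folded k_def]
  have "(LEAST m. n - m \<le> 2 ^ (m - 1)) = (if n - k > 2 ^ (k - 1) then k + 1 else k)"
  proof (rule Least_equality)
    show "n - (if n - k > 2 ^ (k - 1) then k + 1 else k) \<le> 2 ^ ((if n - k > 2 ^ (k - 1) then k + 1 else k) - 1)"
      using bounds by auto
  next
    fix m assume m: "n - m \<le> 2 ^ (m - 1)"
    have "Suc (m - 1) \<le> 2 ^ (m - 1)"
      by (rule Suc_leI[OF less_exp])
    then have "m + 2 ^ (m - 1) \<le> 2 ^ m"
      by (cases m) auto
    show "(if n - k > 2 ^ (k - 1) then k + 1 else k) \<le> m"
    proof (rule ccontr)
      assume "\<not> ?thesis"
      then consider "n - k > 2 ^ (k - 1)" "m \<le> k" | "m \<le> k - 1"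
        by (auto split: if_splits)
      then show False
      proof cases
        case 1
        then have "2 ^ (m - 1) \<le> (2::nat) ^ (k - 1)"
          by (intro power_increasing) auto
        then show False using 1 m by linarith
      next
        case 2
        then have "2 ^ m \<le> (2::nat) ^ (k - 1)"
          by (intro power_increasing) auto
        then show False using \<open>m + 2 ^ (m - 1) \<le> 2 ^ m\<close> m bounds by linarith
      qed
    qed
  qed
  then show ?thesis
    by (simp add: k_def)
qed

theorem theorem11:
  fixes n :: nat
  assumes "n \<ge> 3"
  shows "determining_index (hypercube_vertices n) hypercube_adj =
    (let k = nat \<lceil>log 2 (real n)\<rceil> in
       if n - k > 2 ^ (k - 1) then k + 1 else k)"
proof -
  have "nat \<lceil>log 2 (real n)\<rceil> = ceillog2 n"
    using assms by (simp add: ceillog2_def)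
  then show ?thesis
    using hypercube_determining_index_eq_Least[OF assms] Least_eq_ceillog2[OF assms] by simp
qed

end
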